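(* Let $h:\{0,1\}^*\to\{0,1\}^*$ be the morphism defined by $h(0)=0110100110110010110$ and $h(1)=1001011001001101001$. Then the fixed point $h^\omega(0)$ avoids $\frac{7}{3}^+$-powers; that is, for every $\varepsilon>0$, $h^\omega(0)$ contains no subword that is a $\beta$-power with $\beta\ge\frac{7}{3}+\varepsilon$.
   Context: $h^\omega(0)$ is the infinite word $\lim_{n\to\infty}h^n(0)$ (well defined since $h(0)$ begins with $0$). For a rational $\beta\ge 1$, a $\beta$-power is a word of the form $x^nx'$ with $x$ a nonempty word, $x'$ a prefix of $x$, $n$ a nonnegative integer and $n+|x'|/|x|=\beta$. A word avoids $\alpha^+$-powers if it is $(\alpha+\varepsilon)$-power-free for all $\varepsilon>0$, where $\gamma$-power-free means no subword is a $\beta$-power for any rational $\beta\ge\gamma$. *)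

theory Defs
  imports Complex_Main "HOL-Library.Sublist"
begin

(* Binary alphabet {0,1} represented by the naturals 0 and 1. *)
definition h :: "nat \<Rightarrow> nat list" where
  "h a = (if a = 0
          then [0,1,1,0,1,0,0,1,1,0,1,1,0,0,1,0,1,1,0]
          else [1,0,0,1,0,1,1,0,0,1,0,0,1,1,0,1,0,0,1])"

definition hw :: "nat list \<Rightarrow> nat list" where
  "hw w = concat (map h w)"

(* the fixed point h^omega(0) = lim h^n(0), as an infinite word nat => nat;
   letter k is read off h^(k+1)(0), which has length 19^(k+1) > k *)
definition hfix :: "nat \<Rightarrow> nat" where
  "hfix k = ((hw ^^ Suc k) [0]) ! k"

definition is_power :: "'a list \<Rightarrow> real \<Rightarrow> bool" where
  "is_power u \<beta> \<longleftrightarrow> (\<exists>x x' n. x \<noteq> [] \<and> prefix x' x \<and>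
      u = concat (replicate n x) @ x' \<and>
      real n + real (length x') / real (length x) = \<beta>)"

definition subword :: "(nat \<Rightarrow> 'a) \<Rightarrow> nat \<Rightarrow> nat \<Rightarrow> 'a list" where
  "subword w i m = map w [i..<i+m]"

definition power_free :: "(nat \<Rightarrow> 'a) \<Rightarrow> real \<Rightarrow> bool" where
  "power_free w \<gamma> \<longleftrightarrow> (\<forall>i m \<beta>. \<beta> \<in> \<rat> \<and> \<beta> \<ge> 1 \<and> \<beta> \<ge> \<gamma> \<longrightarrow> \<not> is_power (subword w i m) \<beta>)"

definition avoids_plus :: "(nat \<Rightarrow> 'a) \<Rightarrow> real \<Rightarrow> bool" where
  "avoids_plus w \<alpha> \<longleftrightarrow> (\<forall>\<epsilon>>0. power_free w (\<alpha> + \<epsilon>))"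

end

theory Submission
  imports Defs
begin

(* A factor of w = h^\<omega>(0) of length L with period p satisfies 3L \<le> 7p, and a \<beta>-power x^n x'
   is a factor of length \<beta>|x| with period |x|, so \<beta> \<le> 7/3. The bound is proved by induction
   on p. If L \<ge> p + 37, the factor contains a whole block h(a) of w = h(w) that recurs p positions
   later; since no h(a) occurs inside h(b)h(c) at a nonzero offset, 19 divides p, and because h(0)
   and h(1) differ in every position, the factor descends to a factor of w with period p/19 and
   length at least L/19. Otherwise a counterexample has p \<le> 26, so it lies in the image of five
   consecutive letters of w, which contain no three equal consecutive letters; these finitely many
   cases are checked by evaluation. *)

section \<open>Factors and periods\<close>

lemma prefix_nth_eq: "prefix xs ys \<Longrightarrow> i < length xs \<Longrightarrow> xs ! i = ys ! i"
  by (auto simp: prefix_def nth_append)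

lemma length_subword [simp]: "length (subword w i n) = n"
  by (simp add: subword_def)

lemma nth_subword [simp]: "j < n \<Longrightarrow> subword w i n ! j = w (i + j)"
  by (simp add: subword_def)

lemma take_drop_subword: "r + m \<le> n \<Longrightarrow> take m (drop r (subword w i n)) = subword w (i + r) m"
  by (simp add: subword_def take_map drop_map add.assoc)

definition has_period :: "'a list \<Rightarrow> nat \<Rightarrow> bool" where
  "has_period u p \<longleftrightarrow> (\<forall>t. t + p < length u \<longrightarrow> u ! t = u ! (t + p))"

lemma has_period_subword_iff:
  "has_period (subword w i L) p \<longleftrightarrow> (\<forall>t. i \<le> t \<longrightarrow> t + p < i + L \<longrightarrow> w t = w (t + p))"
proof
  assume per: "has_period (subword w i L) p"
  show "\<forall>t. i \<le> t \<longrightarrow> t + p < i + L \<longrightarrow> w t = w (t + p)"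
  proof (intro allI impI)
    fix t
    assume "i \<le> t" "t + p < i + L"
    then show "w t = w (t + p)"
      using per[unfolded has_period_def, rule_format, of "t - i"] by simp
  qed
next
  assume "\<forall>t. i \<le> t \<longrightarrow> t + p < i + L \<longrightarrow> w t = w (t + p)"
  then show "has_period (subword w i L) p"
    by (auto simp: has_period_def add.assoc)
qed

lemma has_period_append_self: "prefix u (x @ u) \<Longrightarrow> has_period (x @ u) (length x)"
  unfolding has_period_def
proof (intro allI impI)
  fix t
  assume "prefix u (x @ u)" "t + length x < length (x @ u)"
  then have "(x @ u) ! t = u ! t"
    by (intro prefix_nth_eq[symmetric]) simp_all
  then show "(x @ u) ! t = (x @ u) ! (t + length x)"
    by (simp add: nth_append)
qed

lemma prefix_replicate_append:
  "prefix x' x \<Longrightarrow> prefix (concat (replicate n x) @ x') (x @ concat (replicate n x) @ x')"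
  by (induction n) (auto intro: prefix_prefix)

lemma has_period_power:
  assumes "prefix x' x"
  shows "has_period (concat (replicate n x) @ x') (length x)"
proof (cases n)
  case 0
  then show ?thesis
    using assms prefix_length_le by (fastforce simp: has_period_def)
next
  case (Suc m)
  have "prefix (concat (replicate m x) @ x') (x @ concat (replicate m x) @ x')"
    using assms by (rule prefix_replicate_append)
  then show ?thesis
    using has_period_append_self Suc by simp
qed

lemma is_power_has_period:
  assumes "is_power u \<beta>"
  obtains p where "0 < p" "has_period u p" "real (length u) = \<beta> * real p"
proof -
  obtain x x' n where x: "x \<noteq> []" "prefix x' x" "u = concat (replicate n x) @ x'"
    and \<beta>: "real n + real (length x') / real (length x) = \<beta>"
    using assms unfolding is_power_def by blast
  show ?thesis
  proof
    show "0 < length x" "has_period u (length x)"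
      using x has_period_power by simp_all
    show "real (length u) = \<beta> * real (length x)"
      using x(1) unfolding \<beta>[symmetric] x(3) by (simp add: length_concat sum_list_replicate field_simps)
  qed
qed

section \<open>Runs and triples\<close>

fun no_triple :: "'a list \<Rightarrow> bool" where
  "no_triple (a # b # c # w) \<longleftrightarrow> \<not> (a = b \<and> b = c) \<and> no_triple (b # c # w)"
| "no_triple _ \<longleftrightarrow> True"

lemma no_triple_iff_nth:
  "no_triple w \<longleftrightarrow> (\<forall>j < length w - 2. \<not> (w ! j = w ! Suc j \<and> w ! Suc j = w ! Suc (Suc j)))"
proof (induction w rule: no_triple.induct)
  case (1 a b c w)
  then show ?case
    by (simp add: All_less_Suc2)
qed auto

(* c counts the letters True just before bs, so runs_below R 0 bs says that bs has no R
   consecutive letters True; unlike the direct formulation, it is evaluated in linear time. *)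
fun runs_below :: "nat \<Rightarrow> nat \<Rightarrow> bool list \<Rightarrow> bool" where
  "runs_below R c [] \<longleftrightarrow> c < R"
| "runs_below R c (b # bs) \<longleftrightarrow> c < R \<and> runs_below R (if b then Suc c else 0) bs"

lemma runs_below_drop: "runs_below R c bs \<Longrightarrow> \<exists>c'. runs_below R c' (drop i bs)"
  by (induction bs arbitrary: c i) (auto simp: drop_Cons split: nat.split)

lemma runs_below_prefix_run:
  "runs_below R c bs \<Longrightarrow> n \<le> length bs \<Longrightarrow> \<forall>d < n. bs ! d \<Longrightarrow> c + n < R"
proof (induction bs arbitrary: c n)
  case Nil
  then show ?case by simp
next
  case (Cons b bs)
  show ?case
  proof (cases n)
    case 0
    then show ?thesis
      using Cons.prems(1) by simp
  next
    case (Suc m)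
    then have "runs_below R (Suc c) bs" "\<forall>d < m. bs ! d"
      using Cons.prems(1,3) by (auto simp: All_less_Suc2)
    then have "Suc c + m < R"
      using Cons.prems(2) Suc by (intro Cons.IH) simp_all
    then show ?thesis
      using Suc by simp
  qed
qed

lemma runs_below_run_length:
  assumes "runs_below R c bs" "i + n \<le> length bs" "\<forall>d < n. bs ! (i + d)"
  shows "n < R"
proof -
  obtain c' where "runs_below R c' (drop i bs)"
    using runs_below_drop assms(1) by blast
  moreover have "n \<le> length (drop i bs)" "\<forall>d < n. drop i bs ! d"
    using assms(2,3) by simp_all
  ultimately have "c' + n < R"
    by (rule runs_below_prefix_run)
  then show ?thesis
    by simp
qed

section \<open>The morphism and its fixed point\<close>

lemma length_h [simp]: "length (h a) = 19"
  by (simp add: h_def)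

lemma h_binary: "set (h a) \<subseteq> {0, 1}"
  by (simp add: h_def)

lemma h_complement: "h 1 = map (\<lambda>c. 1 - c) (h 0)"
  by (simp add: h_def)

lemma h_nth_inject:
  assumes "a \<in> {0, 1}" "b \<in> {0, 1}" "j < 19" "h a ! j = h b ! j"
  shows "a = b"
proof -
  have "h 1 ! j = 1 - h 0 ! j"
    using assms(3) unfolding h_complement by simp
  then have "h 0 ! j \<noteq> h 1 ! j"
    by arith
  then show ?thesis
    using assms by auto
qed

lemma hw_Nil [simp]: "hw [] = []"
  by (simp add: hw_def)

lemma hw_Cons [simp]: "hw (a # w) = h a @ hw w"
  by (simp add: hw_def)

lemma hw_append: "hw (u @ v) = hw u @ hw v"
  by (simp add: hw_def)

lemma length_hw [simp]: "length (hw w) = 19 * length w"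
  by (induction w) auto

lemma nth_hw: "k < length w \<Longrightarrow> j < 19 \<Longrightarrow> hw w ! (19 * k + j) = h (w ! k) ! j"
proof (induction w arbitrary: k)
  case Nil
  then show ?case by simp
next
  case (Cons a w)
  then show ?case
    by (cases k) (simp_all add: nth_append)
qed

lemma length_hw_iterate: "length ((hw ^^ n) [0]) = 19 ^ n"
  by (induction n) auto

lemma prefix_hw_iterate_Suc: "prefix ((hw ^^ n) [0]) ((hw ^^ Suc n) [0])"
proof (induction n)
  case 0
  then show ?case by (simp add: h_def)
next
  case (Suc n)
  then obtain zs where "(hw ^^ Suc n) [0] = (hw ^^ n) [0] @ zs"
    by (auto simp: prefix_def)
  then show ?case
    by (simp add: prefix_def hw_append)
qed

lemma prefix_hw_iterate: "m \<le> n \<Longrightarrow> prefix ((hw ^^ m) [0]) ((hw ^^ n) [0])"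
proof (induction n rule: dec_induct)
  case base
  then show ?case by simp
next
  case (step n)
  then show ?case
    using prefix_hw_iterate_Suc prefix_order.trans by blast
qed

lemma hfix_eq_nth_hw_iterate:
  assumes "k < 19 ^ n"
  shows "hfix k = (hw ^^ n) [0] ! k"
proof -
  have "k < 19 ^ k"
    by (induction k) auto
  then have "hfix k = (hw ^^ max n (Suc k)) [0] ! k"
    unfolding hfix_def by (intro prefix_nth_eq prefix_hw_iterate) (auto simp: length_hw_iterate)
  also have "\<dots> = (hw ^^ n) [0] ! k"
    using assms by (intro prefix_nth_eq[symmetric] prefix_hw_iterate) (auto simp: length_hw_iterate)
  finally show ?thesis .
qed

lemma hfix_19_mult_add:
  assumes "j < 19"
  shows "hfix (19 * k + j) = h (hfix k) ! j"
proof -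
  have k: "k < 19 ^ Suc k"
    by (induction k) auto
  then have "19 * k + j < 19 ^ Suc (Suc k)"
    using assms by simp
  then have "hfix (19 * k + j) = (hw ^^ Suc (Suc k)) [0] ! (19 * k + j)"
    by (rule hfix_eq_nth_hw_iterate)
  also have "\<dots> = hw ((hw ^^ Suc k) [0]) ! (19 * k + j)"
    by simp
  also have "\<dots> = h ((hw ^^ Suc k) [0] ! k) ! j"
    by (rule nth_hw) (use k assms in \<open>simp_all add: length_hw_iterate\<close>)
  also have "\<dots> = h (hfix k) ! j"
    using hfix_eq_nth_hw_iterate[OF k] by simp
  finally show ?thesis .
qed

lemma hfix_binary: "hfix k \<in> {0, 1}"
proof -
  have "hfix k = h (hfix (k div 19)) ! (k mod 19)"
    using hfix_19_mult_add[of "k mod 19" "k div 19"] by simp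
  also have "\<dots> \<in> set (h (hfix (k div 19)))"
    by simp
  finally show ?thesis
    using h_binary by blast
qed

lemma subword_hfix_19_mult: "subword hfix (19 * k) (19 * n) = hw (subword hfix k n)"
proof (rule nth_equalityI)
  fix s
  assume "s < length (subword hfix (19 * k) (19 * n))"
  then have s: "s div 19 < n"
    by simp
  have "19 * (k + s div 19) + s mod 19 = 19 * k + s"
    by simp
  then have "subword hfix (19 * k) (19 * n) ! s = hfix (19 * (k + s div 19) + s mod 19)"
    using s by (simp add: ac_simps)
  also have "\<dots> = h (hfix (k + s div 19)) ! (s mod 19)"
    by (rule hfix_19_mult_add) simp
  also have "\<dots> = h (subword hfix k n ! (s div 19)) ! (s mod 19)"
    using s by simp
  also have "\<dots> = hw (subword hfix k n) ! (19 * (s div 19) + s mod 19)"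
    by (rule nth_hw[symmetric]) (use s in simp_all)
  finally show "subword hfix (19 * k) (19 * n) ! s = hw (subword hfix k n) ! s"
    by simp
qed simp

lemma subword_hfix_in_blocks:
  "j + m \<le> 19 * n \<Longrightarrow> subword hfix (19 * k + j) m = take m (drop j (hw (subword hfix k n)))"
  by (simp add: subword_hfix_19_mult[symmetric] take_drop_subword)

lemma subword_hfix_binary: "subword hfix i n \<in> set (List.n_lists n [0, 1])"
  using hfix_binary by (force simp: set_n_lists subword_def)

section \<open>Finite checks\<close>

lemma no_triple_hw_pairs: "\<forall>u \<in> set (List.n_lists 2 [0, 1]). no_triple (hw u)"
  by code_simp

lemma hfix_no_triple: "no_triple (subword hfix i n)"
  unfolding no_triple_iff_nth
proof (intro allI impI notI)
  fix j
  assume "j < length (subword hfix i n) - 2"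
    and triple: "subword hfix i n ! j = subword hfix i n ! Suc j \<and>
      subword hfix i n ! Suc j = subword hfix i n ! Suc (Suc j)"
  define k where "k = (i + j) div 19"
  define r where "r = (i + j) mod 19"
  have "j + 2 < n" and kr: "19 * k + r = i + j" and "r < 19"
    using \<open>j < length (subword hfix i n) - 2\<close> by (auto simp: k_def r_def)
  then have in_blocks: "subword hfix i n ! (j + d) = hw (subword hfix k 2) ! (r + d)" if "d < 3" for d
    using that by (auto simp: subword_hfix_19_mult[of k 2, symmetric] add.assoc[symmetric] kr)
  then have "hw (subword hfix k 2) ! r = hw (subword hfix k 2) ! Suc r \<and>
      hw (subword hfix k 2) ! Suc r = hw (subword hfix k 2) ! Suc (Suc r)"
    using triple in_blocks[of 0] in_blocks[of 1] in_blocks[of 2] by simp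
  moreover have "no_triple (hw (subword hfix k 2))"
    using no_triple_hw_pairs subword_hfix_binary by blast
  ultimately show False
    using \<open>r < 19\<close> unfolding no_triple_iff_nth by (elim allE[of _ r]) simp
qed

lemma h_synchronizing:
  "\<forall>u \<in> set (List.n_lists 2 [0, 1]). \<forall>a \<in> set [0, 1]. \<forall>r \<in> set [1..<19]. take 19 (drop r (hw u)) \<noteq> h a"
  by code_simp

(* A run of 4p div 3 + 1 positions t with v ! t = v ! (t + p) is a factor with period p
   longer than 7p/3. *)
lemma short_periods_check:
  "\<forall>v \<in> set (List.n_lists 5 [0, 1]). no_triple v \<longrightarrow>
     (\<forall>p \<in> set [1..<27]. runs_below (4 * p div 3 + 1) 0 (map2 (=) (hw v) (drop p (hw v))))"
  by code_simp

section \<open>Periodic factors of the fixed point\<close>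

lemma hfix_block_shift_dvd:
  assumes "subword hfix (19 * k) 19 = subword hfix (19 * k + p) 19"
  shows "19 dvd p"
proof (rule ccontr)
  assume "\<not> 19 dvd p"
  define q where "q = p div 19"
  define r where "r = p mod 19"
  have r: "r \<in> set [1..<19]"
    using \<open>\<not> 19 dvd p\<close> by (simp add: r_def dvd_eq_mod_eq_0 Suc_le_eq)
  have shift: "19 * k + p = 19 * (k + q) + r"
    by (metis add.assoc distrib_left q_def r_def mult_div_mod_eq)
  have "h (hfix k) = subword hfix (19 * k) 19"
    using subword_hfix_19_mult[of k 1] by (simp add: subword_def)
  also have "\<dots> = subword hfix (19 * (k + q) + r) 19"
    using assms unfolding shift .
  also have "\<dots> = take 19 (drop r (hw (subword hfix (k + q) 2)))"
    using r by (intro subword_hfix_in_blocks) simp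
  finally have "take 19 (drop r (hw (subword hfix (k + q) 2))) = h (hfix k)"
    by simp
  moreover have "hfix k \<in> set [0, 1]"
    using hfix_binary by simp
  ultimately show False
    using h_synchronizing subword_hfix_binary r by blast
qed

lemma has_period_19_dvd:
  assumes per: "has_period (subword hfix i L) p" and long: "p + 37 \<le> L"
  shows "19 dvd p"
proof -
  define k where "k = (i + 18) div 19"
  have "i \<le> 19 * k" "19 * k \<le> i + 18"
    using mod_less_divisor[of 19 "i + 18"] mult_div_mod_eq[of 19 "i + 18"] unfolding k_def
    by linarith+
  then have "subword hfix (19 * k) 19 = subword hfix (19 * k + p) 19"
    using per long by (intro nth_equalityI) (auto simp: has_period_subword_iff ac_simps)
  then show ?thesis
    by (rule hfix_block_shift_dvd)
qed

lemma has_period_desubstitute: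
  assumes per: "has_period (subword hfix i L) (19 * q)" and "19 * q < L"
  obtains i' L' where "has_period (subword hfix i' L') q" "L \<le> 19 * L'"
proof -
  define e where "e = i + L - 19 * q - 1"
  define a where "a = i div 19"
  define b where "b = e div 19"
  have e: "e + 19 * q + 1 = i + L"
    using \<open>19 * q < L\<close> by (simp add: e_def)
  have a: "19 * a \<le> i" "i < 19 * a + 19"
    using mod_less_divisor[of 19 i] mult_div_mod_eq[of 19 i] unfolding a_def by linarith+
  have b: "19 * b \<le> e" "e < 19 * b + 19"
    using mod_less_divisor[of 19 e] mult_div_mod_eq[of 19 e] unfolding b_def by linarith+
  have "a \<le> b"
    unfolding a_def b_def using e \<open>19 * q < L\<close> by (intro div_le_mono) linarith
  then obtain d where d: "b = a + d"
    using le_Suc_ex by blast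
  show ?thesis
  proof
    show "L \<le> 19 * (d + 1 + q)"
      using a b d e unfolding distrib_left by linarith
    show "has_period (subword hfix a (d + 1 + q)) q"
      unfolding has_period_subword_iff
    proof (intro allI impI)
      fix t
      assume "a \<le> t" "t + q < a + (d + 1 + q)"
      then have "t \<le> b"
        using d by linarith
      define j where "j = max i (19 * t) - 19 * t"
      have tj: "19 * t + j = max i (19 * t)"
        by (simp add: j_def)
      have j: "j < 19"
        using a \<open>a \<le> t\<close> by (simp add: j_def)
      have "i \<le> 19 * t + j" "19 * t + j + 19 * q < i + L"
        unfolding tj using b e \<open>t \<le> b\<close> \<open>19 * q < L\<close> by (simp_all add: max_def)
      then have "hfix (19 * t + j) = hfix (19 * t + j + 19 * q)"
        using per unfolding has_period_subword_iff by blast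
      also have "19 * t + j + 19 * q = 19 * (t + q) + j"
        by simp
      finally have "h (hfix t) ! j = h (hfix (t + q)) ! j"
        unfolding hfix_19_mult_add[OF j] .
      then show "hfix t = hfix (t + q)"
        using j hfix_binary h_nth_inject by blast
    qed
  qed
qed

lemma hfix_short_period_bound:
  assumes per: "has_period (subword hfix i L) p" and "0 < p" "p \<le> 26"
  shows "3 * L \<le> 7 * p"
proof (rule ccontr)
  assume "\<not> 3 * L \<le> 7 * p"
  define R where "R = 4 * p div 3 + 1"
  have "R + p \<le> L" "R \<le> 35"
    using \<open>\<not> 3 * L \<le> 7 * p\<close> \<open>p \<le> 26\<close> mult_div_mod_eq[of 3 "4 * p"] unfolding R_def by linarith+
  define k where "k = i div 19"
  define j where "j = i mod 19"
  have i: "i = 19 * k + j" and "j < 19"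
    by (simp_all add: k_def j_def)
  define V where "V = hw (subword hfix k 5)"
  have V: "V = subword hfix (19 * k) 95"
    using subword_hfix_19_mult[of k 5] by (simp add: V_def)
  have "p \<in> set [1..<27]"
    using \<open>0 < p\<close> \<open>p \<le> 26\<close> by simp
  then have "runs_below R 0 (map2 (=) V (drop p V))"
    using short_periods_check subword_hfix_binary[of k 5] hfix_no_triple[of k 5]
    unfolding V_def R_def by blast
  moreover have "j + R \<le> length (map2 (=) V (drop p V))"
    using \<open>j < 19\<close> \<open>R \<le> 35\<close> \<open>p \<le> 26\<close> by (simp add: V)
  moreover have "\<forall>d < R. map2 (=) V (drop p V) ! (j + d)"
  proof (intro allI impI)
    fix d
    assume "d < R"
    then have "hfix (i + d) = hfix (i + d + p)"
      using per \<open>R + p \<le> L\<close> unfolding has_period_subword_iff by simp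
    then show "map2 (=) V (drop p V) ! (j + d)"
      using \<open>d < R\<close> \<open>j < 19\<close> \<open>R \<le> 35\<close> \<open>p \<le> 26\<close> by (simp add: V i ac_simps)
  qed
  ultimately have "R < R"
    by (rule runs_below_run_length)
  then show False
    by simp
qed

lemma hfix_period_bound: "has_period (subword hfix i L) p \<Longrightarrow> 0 < p \<Longrightarrow> 3 * L \<le> 7 * p"
proof (induction p arbitrary: i L rule: less_induct)
  case (less p)
  consider "p + 37 \<le> L" | "p \<le> 26" | "L < p + 37" "26 < p"
    by linarith
  then show ?case
  proof cases
    case 1
    then obtain q where p: "p = 19 * q"
      using has_period_19_dvd less.prems(1) by blast
    moreover have "19 * q < L"
      using 1 p by simp
    ultimately obtain i' L' where "has_period (subword hfix i' L') q" "L \<le> 19 * L'"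
      using has_period_desubstitute less.prems(1) by blast
    moreover have "q < p" "0 < q"
      using p less.prems(2) by simp_all
    ultimately have "3 * L' \<le> 7 * q"
      using less.IH by blast
    then show ?thesis
      using \<open>L \<le> 19 * L'\<close> p by linarith
  next
    case 2
    then show ?thesis
      using hfix_short_period_bound less.prems by blast
  next
    case 3
    then show ?thesis
      by linarith
  qed
qed

theorem theorem13:
  shows "avoids_plus hfix (7/3)"
  unfolding avoids_plus_def power_free_def
proof (intro allI impI notI)
  fix \<epsilon> :: real and i m :: nat and \<beta> :: real
  assume "\<epsilon> > 0" and \<beta>: "\<beta> \<in> \<rat> \<and> \<beta> \<ge> 1 \<and> \<beta> \<ge> 7/3 + \<epsilon>"
    and "is_power (subword hfix i m) \<beta>"
  then obtain p where "0 < p" "has_period (subword hfix i m) p" "real m = \<beta> * real p"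
    by (auto elim: is_power_has_period)
  then have "3 * m \<le> 7 * p"
    by (intro hfix_period_bound)
  then have "3 * (\<beta> * real p) \<le> 7 * real p"
    unfolding \<open>real m = \<beta> * real p\<close>[symmetric] by (metis of_nat_le_iff of_nat_mult of_nat_numeral)
  then have "3 * \<beta> \<le> 7"
    using \<open>0 < p\<close> by simp
  then show False
    using \<beta> \<open>\<epsilon> > 0\<close> by linarith
qed

end
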